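(* Let $P$ be a Sylow $p$-subgroup and $Q$ a Sylow $q$-subgroup of a finite group $G$, where $p\neq q$ are primes. (1) If $a\ge 1$ is an integer with $|P:C_P(Q)|\ge p^a$, then $\Pr(P,Q)\le \frac{p^a+q-1}{p^aq}$. (2) If $[P,Q]\neq 1$, then $\Pr(P,Q)\le\frac{p+q-1}{pq}$.
   Context: For subsets $X,Y$ of a finite group, $\Pr(X,Y)=|\{(x,y)\in X\times Y: xy=yx\}|/(|X||Y|)$. $C_P(Q)$ is the centralizer of $Q$ in $P$. *)

theory Defs
  imports "HOL-Algebra.Algebra" "HOL-Computational_Algebra.Primes"
begin

definition sylow_subgroup :: "('a, 'b) monoid_scheme \<Rightarrow> nat \<Rightarrow> 'a set \<Rightarrow> bool" where
  "sylow_subgroup G p P \<longleftrightarrow> subgroup P G \<and> card P = p ^ multiplicity p (order G)"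

definition comm_prob :: "('a, 'b) monoid_scheme \<Rightarrow> 'a set \<Rightarrow> 'a set \<Rightarrow> real" where
  "comm_prob G A B =
     real (card {(x, y). x \<in> A \<and> y \<in> B \<and> x \<otimes>\<^bsub>G\<^esub> y = y \<otimes>\<^bsub>G\<^esub> x})
       / (real (card A) * real (card B))"

definition centralizer_in :: "('a, 'b) monoid_scheme \<Rightarrow> 'a set \<Rightarrow> 'a set \<Rightarrow> 'a set" where
  "centralizer_in G P Q = {x \<in> P. \<forall>y \<in> Q. x \<otimes>\<^bsub>G\<^esub> y = y \<otimes>\<^bsub>G\<^esub> x}"

definition comm_subgroup :: "('a, 'b) monoid_scheme \<Rightarrow> 'a set \<Rightarrow> 'a set \<Rightarrow> 'a set" where
  "comm_subgroup G H K = generate G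
     {inv\<^bsub>G\<^esub> x \<otimes>\<^bsub>G\<^esub> inv\<^bsub>G\<^esub> y \<otimes>\<^bsub>G\<^esub> x \<otimes>\<^bsub>G\<^esub> y | x y. x \<in> H \<and> y \<in> K}"

end

theory Submission
  imports Defs
begin

text \<open>Write \<open>C = C\<^sub>P(Q)\<close> and, for \<open>x \<in> P\<close>, \<open>C\<^sub>Q(x)\<close> for the elements of \<open>Q\<close> commuting with \<open>x\<close>.
  Counting commuting pairs row by row gives \<open>Pr(P,Q) = (1/|P|) \<Sum>\<^sub>x |C\<^sub>Q(x)|/|Q|\<close>. A row is
  full exactly when \<open>x \<in> C\<close>; otherwise \<open>C\<^sub>Q(x)\<close> is a proper subgroup of the \<open>q\<close>-group \<open>Q\<close>,
  so its index is at least \<open>q\<close>. Hence \<open>Pr(P,Q) \<le> 1/q + (|C|/|P|)(1 - 1/q)\<close>, which is at most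
  \<open>(m + q - 1)/(m q)\<close> whenever \<open>|P:C| \<ge> m\<close>. For (2), \<open>[P,Q] \<noteq> 1\<close> forces \<open>C\<close> to be a proper
  subgroup of the \<open>p\<close>-group \<open>P\<close>, so \<open>|P:C| \<ge> p\<close>.\<close>

lemma (in group) card_subgroup_dvd_card_subgroup:
  assumes "subgroup H G" "subgroup K G" "H \<subseteq> K"
  shows "card H dvd card K"
proof -
  have "subgroup H (G\<lparr>carrier := K\<rparr>)"
    using subgroup_incl assms by blast
  with group.lagrange[OF subgroup_imp_group[OF assms(2)]]
  have "card (rcosets\<^bsub>G\<lparr>carrier := K\<rparr>\<^esub> H) * card H = card K"
    by (simp add: order_def)
  then show ?thesis
    by (metis dvd_triv_right)
qed

lemma prime_power_proper_divisor_mult_le: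
  fixes r :: nat
  assumes "Factorial_Ring.prime r" "d dvd r ^ k" "d < r ^ k"
  shows "d * r \<le> r ^ k"
proof -
  obtain i where "i \<le> k" "d = r ^ i"
    using assms(1,2) divides_primepow_nat by blast
  with assms(3) have "i < k"
    by (metis le_neq_implies_less less_irrefl)
  then have "r ^ Suc i \<le> r ^ k"
    using prime_ge_1_nat[OF assms(1)] by (intro power_increasing) simp_all
  with \<open>d = r ^ i\<close> show ?thesis
    by (simp add: mult.commute)
qed

lemma (in group) proper_subgroup_card_mult_le:
  fixes r :: nat
  assumes "subgroup H G" "subgroup K G" "H \<subset> K" "finite K"
    and "Factorial_Ring.prime r" "card K = r ^ k"
  shows "card H * r \<le> card K"
proof -
  have "card H dvd r ^ k"
    using assms card_subgroup_dvd_card_subgroup[of H K] by auto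
  moreover have "card H < r ^ k"
    using psubset_card_mono[OF assms(4,3)] assms(6) by simp
  ultimately show ?thesis
    using assms(5,6) by (simp add: prime_power_proper_divisor_mult_le)
qed

lemma (in group) subgroup_centralizer_in:
  assumes "subgroup P G" "Q \<subseteq> carrier G"
  shows "subgroup (centralizer_in G P Q) G"
proof (rule subgroupI)
  have PG: "P \<subseteq> carrier G"
    using assms(1) subgroup.subset by blast
  show "centralizer_in G P Q \<subseteq> carrier G" "centralizer_in G P Q \<noteq> {}"
    using PG assms subgroup.one_closed unfolding centralizer_in_def by fastforce+
  fix a b
  assume a: "a \<in> centralizer_in G P Q" and b: "b \<in> centralizer_in G P Q"
  then have "a \<in> P" "b \<in> P" "a \<in> carrier G" "b \<in> carrier G"
    using PG unfolding centralizer_in_def by auto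
  have "inv a \<otimes> y = y \<otimes> inv a" if "y \<in> Q" for y
    using a that assms(2) \<open>a \<in> carrier G\<close> unfolding centralizer_in_def
    by (auto simp add: inv_solve_left inv_solve_right m_assoc)
  with \<open>a \<in> P\<close> assms(1) show "inv a \<in> centralizer_in G P Q"
    unfolding centralizer_in_def by (simp add: subgroup.m_inv_closed)
  have "a \<otimes> b \<otimes> y = y \<otimes> (a \<otimes> b)" if "y \<in> Q" for y
  proof -
    have "y \<in> carrier G" "a \<otimes> y = y \<otimes> a" "b \<otimes> y = y \<otimes> b"
      using a b that assms(2) unfolding centralizer_in_def by auto
    then show ?thesis
      using \<open>a \<in> carrier G\<close> \<open>b \<in> carrier G\<close> by (metis m_assoc)
  qed
  with \<open>a \<in> P\<close> \<open>b \<in> P\<close> assms(1) show "a \<otimes> b \<in> centralizer_in G P Q"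
    unfolding centralizer_in_def by (simp add: subgroup.m_closed)
qed

lemma (in group) card_centralizer_in_gt_0:
  assumes "subgroup P G" "finite P" "Q \<subseteq> carrier G"
  shows "card (centralizer_in G P Q) > 0"
proof -
  have "\<one> \<in> centralizer_in G P Q"
    using subgroup.one_closed[OF subgroup_centralizer_in] assms(1,3) by blast
  moreover have "finite (centralizer_in G P Q)"
    using assms(2) unfolding centralizer_in_def by simp
  ultimately show ?thesis
    using card_gt_0_iff by blast
qed

lemma comm_pairs_eq_Sigma_centralizer_in:
  "{(x, y). x \<in> P \<and> y \<in> Q \<and> x \<otimes>\<^bsub>G\<^esub> y = y \<otimes>\<^bsub>G\<^esub> x}
     = Sigma P (\<lambda>x. centralizer_in G Q {x})"
  unfolding centralizer_in_def by auto

lemma (in group) card_comm_pairs_le: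
  fixes q :: nat
  assumes "P \<subseteq> carrier G" "finite P" "subgroup Q G" "finite Q"
    and "Factorial_Ring.prime q" "card Q = q ^ k"
  defines "C \<equiv> centralizer_in G P Q"
  shows "real (card {(x, y). x \<in> P \<and> y \<in> Q \<and> x \<otimes> y = y \<otimes> x})
           \<le> real (card C) * card Q + (real (card P) - card C) * card Q / q"
proof -
  let ?Z = "\<lambda>x. centralizer_in G Q {x}"
  have "C \<subseteq> P"
    unfolding C_def centralizer_in_def by auto
  have full_row: "card (?Z x) = card Q" if "x \<in> C" for x
  proof -
    have "?Z x = Q"
      using that unfolding C_def centralizer_in_def by force
    then show ?thesis by simp
  qed
  have short_row: "real (card (?Z x)) \<le> card Q / q" if "x \<in> P - C" for x
  proof -
    have "?Z x \<subset> Q"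
      using that unfolding C_def centralizer_in_def by force
    moreover have "subgroup (?Z x) G"
      using that assms(1,3) by (intro subgroup_centralizer_in) auto
    ultimately have "card (?Z x) * q \<le> card Q"
      using proper_subgroup_card_mult_le assms(3-6) by blast
    then show ?thesis
      using prime_gt_0_nat[OF assms(5)] by (simp add: field_simps flip: of_nat_mult)
  qed
  have "card {(x, y). x \<in> P \<and> y \<in> Q \<and> x \<otimes> y = y \<otimes> x} = (\<Sum>x\<in>P. card (?Z x))"
    unfolding comm_pairs_eq_Sigma_centralizer_in
    using assms(2,4) by (simp add: card_SigmaI centralizer_in_def)
  also have "real \<dots> = (\<Sum>x\<in>C. real (card (?Z x))) + (\<Sum>x\<in>P - C. real (card (?Z x)))"
    using sum.subset_diff[OF \<open>C \<subseteq> P\<close> assms(2)] by (simp add: add.commute)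
  also have "\<dots> \<le> (\<Sum>x\<in>C. real (card Q)) + (\<Sum>x\<in>P - C. card Q / q)"
    using full_row short_row by (intro add_mono sum_mono) auto
  also have "\<dots> = real (card C) * card Q + (real (card P) - card C) * card Q / q"
    using \<open>C \<subseteq> P\<close> assms(2) finite_subset[OF \<open>C \<subseteq> P\<close>]
    by (simp add: card_Diff_subset card_mono of_nat_diff)
  finally show ?thesis .
qed

lemma pair_count_ratio_le:
  fixes S c P Q q m :: real
  assumes "S \<le> c * Q + (P - c) * Q / q" "c * m \<le> P"
    and "c > 0" "P > 0" "Q > 0" "q \<ge> 1" "m > 0"
  shows "S / (P * Q) \<le> (m + q - 1) / (m * q)"
proof -
  have "S / (P * Q) \<le> 1 / q + c / P * (1 - 1 / q)"
    using assms(1,4,5,6) by (simp add: field_simps divide_right_mono)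
  also have "\<dots> \<le> 1 / q + 1 / m * (1 - 1 / q)"
    using assms(2-7) by (intro add_left_mono mult_right_mono) (simp_all add: field_simps)
  also have "\<dots> = (m + q - 1) / (m * q)"
    using assms(6,7) by (simp add: field_simps)
  finally show ?thesis .
qed

lemma (in group) comm_prob_le_of_centralizer_index:
  fixes q :: nat and m :: real
  assumes "subgroup P G" "finite P" "subgroup Q G" "finite Q"
    and "Factorial_Ring.prime q" "card Q = q ^ k"
    and "real (card (centralizer_in G P Q)) * m \<le> card P" "m > 0"
  shows "comm_prob G P Q \<le> (m + q - 1) / (m * q)"
proof -
  have "card (centralizer_in G P Q) > 0"
    using card_centralizer_in_gt_0 assms(1-3) subgroup.subset by blast
  moreover have "card P > 0" "card Q > 0"
    using assms(1-4) subgroup.one_closed card_gt_0_iff by blast+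
  moreover have "real q \<ge> 1"
    using prime_ge_1_nat[OF assms(5)] by simp
  ultimately show ?thesis
    unfolding comm_prob_def
    by (intro pair_count_ratio_le
        [OF card_comm_pairs_le[OF subgroup.subset[OF assms(1)] assms(2-6)] assms(7)])
      (simp_all add: assms(8))
qed

lemma (in group) comm_subgroup_trivial_if_centralizer_in_eq:
  assumes "P \<subseteq> carrier G" "Q \<subseteq> carrier G" "centralizer_in G P Q = P"
  shows "comm_subgroup G P Q = {\<one>}"
proof -
  have "inv x \<otimes> inv y \<otimes> x \<otimes> y = \<one>" if "x \<in> P" "y \<in> Q" for x y
  proof -
    have "x \<in> carrier G" "y \<in> carrier G" "x \<otimes> y = y \<otimes> x"
      using that assms unfolding centralizer_in_def by auto
    then show ?thesis
      by (metis inv_closed inv_mult_group l_inv m_assoc m_closed)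
  qed
  then have "comm_subgroup G P Q \<subseteq> {\<one>}"
    unfolding comm_subgroup_def by (intro generate_subgroup_incl triv_subgroup) blast
  then show ?thesis
    unfolding comm_subgroup_def using generate.one by blast
qed

lemma (in group) card_centralizer_in_mult_le_if_comm_subgroup_nontrivial:
  fixes p :: nat
  assumes "subgroup P G" "finite P" "Factorial_Ring.prime p" "card P = p ^ k"
    and "Q \<subseteq> carrier G" "comm_subgroup G P Q \<noteq> {\<one>}"
  shows "card (centralizer_in G P Q) * p \<le> card P"
proof -
  have "centralizer_in G P Q \<noteq> P"
    using comm_subgroup_trivial_if_centralizer_in_eq subgroup.subset[OF assms(1)] assms(5,6)
    by blast
  then have "centralizer_in G P Q \<subset> P"
    unfolding centralizer_in_def by blast
  then show ?thesis
    by (rule proper_subgroup_card_mult_le[OF subgroup_centralizer_in[OF assms(1,5)] assms(1) _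
          assms(2-4)])
qed

theorem lemma2p6:
  fixes G (structure) and P Q :: "'a set" and p q :: nat
  assumes "group G" and "finite (carrier G)"
    and "Factorial_Ring.prime p" and "Factorial_Ring.prime q" and "p \<noteq> q"
    and "sylow_subgroup G p P" and "sylow_subgroup G q Q"
  shows "(\<forall>a::nat. a \<ge> 1 \<and> real (card P) / real (card (centralizer_in G P Q)) \<ge> real p ^ a
           \<longrightarrow> comm_prob G P Q \<le> (real p ^ a + real q - 1) / (real p ^ a * real q))
       \<and> (comm_subgroup G P Q \<noteq> {\<one>} \<longrightarrow>
           comm_prob G P Q \<le> (real p + real q - 1) / (real p * real q))"
proof -
  interpret group G by fact
  let ?C = "centralizer_in G P Q"
  have P: "subgroup P G" "card P = p ^ multiplicity p (order G)"
    and Q: "subgroup Q G" "card Q = q ^ multiplicity q (order G)"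
    using assms(6,7) unfolding sylow_subgroup_def by auto
  have QG: "Q \<subseteq> carrier G" and "finite P" "finite Q"
    using P(1) Q(1) subgroup.subset assms(2) finite_subset by metis+
  note bound = comm_prob_le_of_centralizer_index[OF P(1) \<open>finite P\<close> Q(1) \<open>finite Q\<close> assms(4) Q(2)]
  have "card ?C > 0"
    using card_centralizer_in_gt_0 P(1) \<open>finite P\<close> QG by blast
  have "real p ^ a > 0" for a
    using prime_gt_0_nat[OF assms(3)] by simp
  show ?thesis
  proof (intro conjI allI impI)
    fix a :: nat
    assume "1 \<le> a \<and> real p ^ a \<le> real (card P) / real (card ?C)"
    with \<open>card ?C > 0\<close> have "real (card ?C) * real p ^ a \<le> card P"
      by (simp add: pos_le_divide_eq mult.commute)
    with \<open>real p ^ a > 0\<close> show "comm_prob G P Q \<le> (real p ^ a + real q - 1) / (real p ^ a * real q)"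
      by (intro bound[of "real p ^ a"])
  next
    assume "comm_subgroup G P Q \<noteq> {\<one>}"
    then have "real (card ?C) * real p \<le> card P"
      using card_centralizer_in_mult_le_if_comm_subgroup_nontrivial[OF P(1) \<open>finite P\<close> assms(3) P(2) QG]
      by (simp flip: of_nat_mult)
    with \<open>real p ^ 1 > 0\<close> show "comm_prob G P Q \<le> (real p + real q - 1) / (real p * real q)"
      by (intro bound[of "real p"]) simp_all
  qed
qed

end
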